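(* Let $(X,\Sigma)$ be a locally finite test space and let $\mathrm{Pl}:E(X,\Sigma)\to D$ be a plausibility measure on it. If $\mathrm{Pl}$ is Archimedean, then $\mathrm{Pl}$ almost agrees with some probability measure $\mu$ on $(X,\Sigma)$. That is, there is a probability measure $\mu$ such that for all events $A,B$, $\mathrm{Pl}(A)\preceq\mathrm{Pl}(B)$ implies $\mu(A)\le\mu(B)$.
   Context: A test space $(X,\Sigma)$ is a set $X$ of outcomes together with a set $\Sigma\subseteq 2^X$ of subsets (called tests) with $\bigcup_{T\in\Sigma}T=X$. It is locally finite if every test is a finite set. An event is a subset of $X$ that is contained in some test, and $E(X,\Sigma)$ denotes the set of all events. A probability measure on $(X,\Sigma)$ is a function $\mu:X\to\mathbb{R}_{\ge0}$ with $\sum_{x\in T}\mu(x)=1$ for every $T\in\Sigma$. It is extended to events by $\mu(A)=\sum_{x\in A}\mu(x)$. A plausibility measure is a function $\mathrm{Pl}:E(X,\Sigma)\to D$, where $(D,\preceq)$ is a partially ordered set, satisfying three conditions: (i) $\mathrm{Pl}(T)=\mathrm{Pl}(R)$ for all $T,R\in\Sigma$; (ii) $A\subseteq B$ implies $\mathrm{Pl}(A)\preceq\mathrm{Pl}(B)$; (iii) $\mathrm{Pl}(\emptyset)\prec\mathrm{Pl}(T)$ for every $T\in\Sigma$. Here $a\prec b$ means $a\preceq b$ and $b\not\preceq a$. $\mathrm{Pl}$ is Archimedean if the following holds for every $n\ge1$ and every pair of finite families of events $(A_1,\dots,A_n)$ and $(B_1,\dots,B_n)$ such that each outcome $x\in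 X$ belongs to the same number of the $A_i$ as of the $B_i$ (counted with multiplicity): whenever $\mathrm{Pl}(A_i)\preceq\mathrm{Pl}(B_i)$ for all $i=1,\dots,n-1$, then $\mathrm{Pl}(A_n)\succeq\mathrm{Pl}(B_n)$. *)

theory Defs
  imports Complex_Main
begin

definition test_space :: "'a set \<Rightarrow> 'a set set \<Rightarrow> bool" where
  "test_space X \<Sigma> \<longleftrightarrow> \<Sigma> \<subseteq> Pow X \<and> \<Union>\<Sigma> = X"

definition locally_finite :: "'a set \<Rightarrow> 'a set set \<Rightarrow> bool" where
  "locally_finite X \<Sigma> \<longleftrightarrow> test_space X \<Sigma> \<and> (\<forall>T\<in>\<Sigma>. finite T)"

definition events :: "'a set set \<Rightarrow> 'a set set" where
  "events \<Sigma> = {A. \<exists>T\<in>\<Sigma>. A \<subseteq> T}"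

text \<open>Probability measure on outcomes; extended to events by mu(A) = sum over A.\<close>
definition prob_measure :: "'a set \<Rightarrow> 'a set set \<Rightarrow> ('a \<Rightarrow> real) \<Rightarrow> bool" where
  "prob_measure X \<Sigma> \<mu> \<longleftrightarrow> (\<forall>x\<in>X. \<mu> x \<ge> 0) \<and> (\<forall>T\<in>\<Sigma>. (\<Sum>x\<in>T. \<mu> x) = 1)"

definition plausibility :: "'a set set \<Rightarrow> ('a set \<Rightarrow> 'd::order) \<Rightarrow> bool" where
  "plausibility \<Sigma> Pl \<longleftrightarrow>
     (\<forall>T\<in>\<Sigma>. \<forall>R\<in>\<Sigma>. Pl T = Pl R) \<and>
     (\<forall>A\<in>events \<Sigma>. \<forall>B\<in>events \<Sigma>. A \<subseteq> B \<longrightarrow> Pl A \<le> Pl B) \<and>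
     (\<forall>T\<in>\<Sigma>. Pl {} < Pl T)"

definition archimedean :: "'a set \<Rightarrow> 'a set set \<Rightarrow> ('a set \<Rightarrow> 'd::order) \<Rightarrow> bool" where
  "archimedean X \<Sigma> Pl \<longleftrightarrow>
     (\<forall>n::nat. \<forall>A B :: nat \<Rightarrow> 'a set.
        n \<ge> 1 \<longrightarrow>
        (\<forall>i\<in>{1..n}. A i \<in> events \<Sigma> \<and> B i \<in> events \<Sigma>) \<longrightarrow>
        (\<forall>x\<in>X. card {i\<in>{1..n}. x \<in> A i} = card {i\<in>{1..n}. x \<in> B i}) \<longrightarrow>
        (\<forall>i\<in>{1..n-1}. Pl (A i) \<le> Pl (B i)) \<longrightarrow>
        Pl (B n) \<le> Pl (A n))"

end

theory Submission
  imports Defs "HOL-Analysis.Analysis"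
begin

text \<open>By Tychonoff the cube [0,1]^X is compact, and each condition \<open>\<mu>(T) = 1\<close> for a test T and
  \<open>\<mu>(A) \<le> \<mu>(B)\<close> for \<open>Pl A \<preceq> Pl B\<close> cuts out a closed set, so it suffices to satisfy finitely
  many of them at once. Together with \<open>\<mu> \<ge> 0\<close>, \<open>\<mu>(T) = \<mu>(T\<^sub>0)\<close> and the strict \<open>\<mu>(\<emptyset>) < \<mu>(T\<^sub>0)\<close>
  they form a finite homogeneous system of integer linear inequalities. By Fourier--Motzkin
  elimination it is either solvable, and a solution normalises to the required measure, or a
  positive integer combination of the inequalities involving the strict one vanishes identically.
  Such a combination is a list of comparisons \<open>Pl A\<^sub>i \<preceq> Pl B\<^sub>i\<close> in which every outcome is
  counted equally often on both sides and which contains \<open>\<emptyset> \<preceq> T\<^sub>0\<close>; putting that comparison last,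
  the Archimedean property yields \<open>Pl T\<^sub>0 \<preceq> Pl \<emptyset>\<close>, contradicting \<open>Pl \<emptyset> \<prec> Pl T\<^sub>0\<close>.\<close>

datatype 'v ineq = Ineq (coeff: "'v \<Rightarrow> int") (strict: bool)

definition lin :: "'v set \<Rightarrow> ('v \<Rightarrow> int) \<Rightarrow> ('v \<Rightarrow> real) \<Rightarrow> real" where
  "lin V a \<mu> = (\<Sum>v\<in>V. of_int (a v) * \<mu> v)"

definition holds :: "'v set \<Rightarrow> ('v \<Rightarrow> real) \<Rightarrow> 'v ineq \<Rightarrow> bool" where
  "holds V \<mu> c \<longleftrightarrow> 0 \<le> lin V (coeff c) \<mu> \<and> (strict c \<longrightarrow> 0 < lin V (coeff c) \<mu>)"

lemma lin_fun_upd: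
  assumes "finite V" "x \<notin> V"
  shows "lin (insert x V) a (\<mu>(x := t)) = of_int (a x) * t + lin V a \<mu>"
proof -
  have "(\<Sum>v\<in>V. of_int (a v) * (\<mu>(x := t)) v) = lin V a \<mu>"
    unfolding lin_def using assms(2) by (intro sum.cong) auto
  then show ?thesis unfolding lin_def using assms by simp
qed

lemma lin_linear: "lin V (\<lambda>v. k * a v + l * b v) \<mu> = of_int k * lin V a \<mu> + of_int l * lin V b \<mu>"
  unfolding lin_def by (simp add: sum.distrib sum_distrib_left algebra_simps)

inductive_set pos_comb :: "'v ineq set \<Rightarrow> 'v ineq set" for C where
  base: "c \<in> C \<Longrightarrow> c \<in> pos_comb C"
| add: "c \<in> pos_comb C \<Longrightarrow> d \<in> pos_comb C \<Longrightarrow>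
    Ineq (\<lambda>v. coeff c v + coeff d v) (strict c \<or> strict d) \<in> pos_comb C"

lemma pos_comb_scale:
  assumes c: "c \<in> pos_comb C" and "0 < k"
  shows "Ineq (\<lambda>v. k * coeff c v) (strict c) \<in> pos_comb C"
proof -
  have "Ineq (\<lambda>v. int (Suc n) * coeff c v) (strict c) \<in> pos_comb C" for n
  proof (induction n)
    case 0
    show ?case using c by simp
  next
    case (Suc n)
    from pos_comb.add[OF c Suc] show ?case by (simp add: algebra_simps)
  qed
  from this[of "nat (k - 1)"] show ?thesis using \<open>0 < k\<close> by simp
qed

lemma pos_comb_trans: "c \<in> pos_comb C' \<Longrightarrow> C' \<subseteq> pos_comb C \<Longrightarrow> c \<in> pos_comb C"
  by (induction rule: pos_comb.induct) (auto intro: pos_comb.add)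

lemma coeff_pos_comb_eq_0: "c \<in> pos_comb C \<Longrightarrow> (\<forall>d\<in>C. coeff d x = 0) \<Longrightarrow> coeff c x = 0"
  by (induction rule: pos_comb.induct) auto

lemma pos_comb_sum_list:
  "c \<in> pos_comb C \<Longrightarrow> \<exists>cs. set cs \<subseteq> C \<and> (\<forall>v. coeff c v = (\<Sum>d\<leftarrow>cs. coeff d v))
     \<and> (strict c \<longleftrightarrow> (\<exists>d\<in>set cs. strict d))"
proof (induction rule: pos_comb.induct)
  case (base c)
  then show ?case by (intro exI[of _ "[c]"]) auto
next
  case (add c d)
  from add.IH(1) obtain cs where
    "set cs \<subseteq> C \<and> (\<forall>v. coeff c v = (\<Sum>d\<leftarrow>cs. coeff d v)) \<and> (strict c \<longleftrightarrow> (\<exists>d\<in>set cs. strict d))"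
    by (rule exE)
  moreover from add.IH(2) obtain ds where
    "set ds \<subseteq> C \<and> (\<forall>v. coeff d v = (\<Sum>d\<leftarrow>ds. coeff d v)) \<and> (strict d \<longleftrightarrow> (\<exists>d\<in>set ds. strict d))"
    by (rule exE)
  ultimately show ?case by (intro exI[of _ "cs @ ds"]) auto
qed

definition combine :: "'v \<Rightarrow> 'v ineq \<Rightarrow> 'v ineq \<Rightarrow> 'v ineq" where
  "combine x p q = Ineq (\<lambda>v. (- coeff q x) * coeff p v + coeff p x * coeff q v) (strict p \<or> strict q)"

definition eliminate :: "'v \<Rightarrow> 'v ineq set \<Rightarrow> 'v ineq set" where
  "eliminate x C = {c\<in>C. coeff c x = 0} \<union>
     (\<lambda>(p, q). combine x p q) ` ({p\<in>C. 0 < coeff p x} \<times> {q\<in>C. coeff q x < 0})"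

lemma finite_eliminate: "finite C \<Longrightarrow> finite (eliminate x C)"
  unfolding eliminate_def by auto

lemma coeff_eliminate: "c \<in> eliminate x C \<Longrightarrow> coeff c x = 0"
  unfolding eliminate_def combine_def by (auto simp: algebra_simps)

lemma eliminate_subset_pos_comb: "eliminate x C \<subseteq> pos_comb C"
proof
  fix c assume "c \<in> eliminate x C"
  then consider "c \<in> C" | p q where "p \<in> C" "0 < coeff p x" "q \<in> C" "coeff q x < 0" "c = combine x p q"
    unfolding eliminate_def by auto
  then show "c \<in> pos_comb C"
  proof cases
    case 2
    have "Ineq (\<lambda>v. (- coeff q x) * coeff p v) (strict p) \<in> pos_comb C"
         "Ineq (\<lambda>v. coeff p x * coeff q v) (strict q) \<in> pos_comb C"
      by (rule pos_comb_scale[OF pos_comb.base]; use 2 in simp)+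
    from pos_comb.add[OF this] show ?thesis unfolding 2 combine_def ineq.sel .
  qed (rule pos_comb.base)
qed

lemma exists_between_bounds:
  fixes L U :: "'i \<Rightarrow> real"
  assumes "finite P" "finite N"
    and LU: "\<And>p q. p \<in> P \<Longrightarrow> q \<in> N \<Longrightarrow> L p \<le> U q \<and> (sl p \<or> su q \<longrightarrow> L p < U q)"
  shows "\<exists>t. (\<forall>p\<in>P. L p \<le> t \<and> (sl p \<longrightarrow> L p < t)) \<and> (\<forall>q\<in>N. t \<le> U q \<and> (su q \<longrightarrow> t < U q))"
proof -
  define l where "l = Max (L ` P)"
  define u where "u = Min (U ` N)"
  have l: "L p \<le> l" if "p \<in> P" for p using that \<open>finite P\<close> unfolding l_def by simp
  have u: "u \<le> U q" if "q \<in> N" for q using that \<open>finite N\<close> unfolding u_def by simp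
  consider "P = {}" | "N = {}" | "P \<noteq> {}" "N \<noteq> {}" by blast
  then show ?thesis
  proof cases
    case 1
    then show ?thesis using u by (intro exI[of _ "u - 1"]) force
  next
    case 2
    then show ?thesis using l by (intro exI[of _ "l + 1"]) force
  next
    case 3
    have "l \<in> L ` P" "u \<in> U ` N"
      unfolding l_def u_def using 3 assms(1,2) by (auto intro: Max_in Min_in)
    then obtain p0 q0 where p0: "p0 \<in> P" "L p0 = l" and q0: "q0 \<in> N" "U q0 = u" by auto
    have "L p \<le> (l + u) / 2 \<and> (sl p \<longrightarrow> L p < (l + u) / 2)" if "p \<in> P" for p
      using l[OF that] LU[OF that q0(1)] LU[OF p0(1) q0(1)] p0(2) q0(2) by auto
    moreover have "(l + u) / 2 \<le> U q \<and> (su q \<longrightarrow> (l + u) / 2 < U q)" if "q \<in> N" for q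
      using u[OF that] LU[OF p0(1) that] LU[OF p0(1) q0(1)] p0(2) q0(2) by auto
    ultimately show ?thesis by blast
  qed
qed

lemma holds_extend_eliminate:
  assumes V: "finite V" "x \<notin> V" and "finite C"
    and sol: "\<forall>c\<in>eliminate x C. holds V \<mu> c"
  shows "\<exists>t. \<forall>c\<in>C. holds (insert x V) (\<mu>(x := t)) c"
proof -
  define P where "P = {p\<in>C. 0 < coeff p x}"
  define N where "N = {q\<in>C. coeff q x < 0}"
  define r where "r c = lin V (coeff c) \<mu>" for c
  define L where "L p = - r p / of_int (coeff p x)" for p
  define U where "U q = r q / of_int (- coeff q x)" for q
  have lin_upd: "lin (insert x V) (coeff c) (\<mu>(x := t)) = of_int (coeff c x) * t + r c" for c t
    unfolding r_def using V by (rule lin_fun_upd)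
  have lower: "holds (insert x V) (\<mu>(x := t)) p \<longleftrightarrow> L p \<le> t \<and> (strict p \<longrightarrow> L p < t)"
    if "p \<in> P" for p t
    using that unfolding holds_def lin_upd L_def P_def by (auto simp: field_simps)
  have upper: "holds (insert x V) (\<mu>(x := t)) q \<longleftrightarrow> t \<le> U q \<and> (strict q \<longrightarrow> t < U q)"
    if "q \<in> N" for q t
    using that unfolding holds_def lin_upd U_def N_def by (auto simp: field_simps)
  have LU: "L p \<le> U q \<and> (strict p \<or> strict q \<longrightarrow> L p < U q)" if "p \<in> P" "q \<in> N" for p q
  proof -
    have "holds V \<mu> (combine x p q)"
      using sol that unfolding eliminate_def P_def N_def by blast
    moreover have "lin V (coeff (combine x p q)) \<mu> = of_int (- coeff q x) * r p + of_int (coeff p x) * r q"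
      unfolding combine_def r_def ineq.sel by (rule lin_linear)
    ultimately show ?thesis
      using that unfolding holds_def L_def U_def P_def N_def combine_def
      by (auto simp: field_simps)
  qed
  have "finite P" "finite N" using \<open>finite C\<close> unfolding P_def N_def by auto
  then obtain t where t: "\<forall>p\<in>P. L p \<le> t \<and> (strict p \<longrightarrow> L p < t)" "\<forall>q\<in>N. t \<le> U q \<and> (strict q \<longrightarrow> t < U q)"
    using exists_between_bounds[of P N L U strict strict] LU by blast
  have "holds (insert x V) (\<mu>(x := t)) c" if "c \<in> C" for c
  proof -
    have "c \<in> P \<or> c \<in> N \<or> coeff c x = 0" using that by (auto simp: P_def N_def)
    then consider "c \<in> P" | "c \<in> N" | "coeff c x = 0" by blast
    then show ?thesis
    proof cases
      case 3
      then have "holds V \<mu> c" using sol that unfolding eliminate_def by blast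
      then show ?thesis using 3 unfolding holds_def lin_upd r_def by simp
    qed (use t lower upper in auto)
  qed
  then show ?thesis by blast
qed

theorem fourier_motzkin:
  assumes "finite V" "finite C"
  shows "(\<exists>\<mu>. \<forall>c\<in>C. holds V \<mu> c) \<or> (\<exists>c\<in>pos_comb C. strict c \<and> (\<forall>v\<in>V. coeff c v = 0))"
  using assms
proof (induction V arbitrary: C rule: finite_induct)
  case empty
  then show ?case by (auto simp: holds_def lin_def intro: pos_comb.base)
next
  case (insert x V)
  from insert.IH[OF finite_eliminate[OF insert.prems]] show ?case
  proof
    assume "\<exists>\<mu>. \<forall>c\<in>eliminate x C. holds V \<mu> c"
    then show ?case using holds_extend_eliminate[OF insert.hyps(1,2) insert.prems] by blast
  next
    assume "\<exists>c\<in>pos_comb (eliminate x C). strict c \<and> (\<forall>v\<in>V. coeff c v = 0)"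
    then obtain c where "c \<in> pos_comb (eliminate x C)" "strict c" "\<forall>v\<in>V. coeff c v = 0" by blast
    moreover have "coeff c x = 0"
      using \<open>c \<in> _\<close> by (rule coeff_pos_comb_eq_0) (auto intro: coeff_eliminate)
    moreover have "c \<in> pos_comb C"
      using \<open>c \<in> _\<close> eliminate_subset_pos_comb by (rule pos_comb_trans)
    ultimately show ?case by auto
  qed
qed

lemma events_subset: "A \<subseteq> B \<Longrightarrow> B \<in> events \<Sigma> \<Longrightarrow> A \<in> events \<Sigma>"
  unfolding events_def by blast

lemma test_in_events: "T \<in> \<Sigma> \<Longrightarrow> T \<in> events \<Sigma>"
  unfolding events_def by blast

lemma event_finite_subset:
  assumes "locally_finite X \<Sigma>" "A \<in> events \<Sigma>"
  shows "finite A" "A \<subseteq> X"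
  using assms unfolding locally_finite_def test_space_def events_def
  by (auto intro: finite_subset)

lemma plausibility_mono:
  "plausibility \<Sigma> Pl \<Longrightarrow> A \<subseteq> B \<Longrightarrow> A \<in> events \<Sigma> \<Longrightarrow> B \<in> events \<Sigma> \<Longrightarrow> Pl A \<le> Pl B"
  unfolding plausibility_def by blast

lemma plausibility_tests_eq: "plausibility \<Sigma> Pl \<Longrightarrow> T \<in> \<Sigma> \<Longrightarrow> R \<in> \<Sigma> \<Longrightarrow> Pl T = Pl R"
  unfolding plausibility_def by blast

lemma plausibility_empty_less_test: "plausibility \<Sigma> Pl \<Longrightarrow> T \<in> \<Sigma> \<Longrightarrow> Pl {} < Pl T"
  unfolding plausibility_def by blast

definition plaus_le :: "'a set set \<Rightarrow> ('a set \<Rightarrow> 'd::order) \<Rightarrow> ('a set \<times> 'a set) set" where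
  "plaus_le \<Sigma> Pl = {(A, B). A \<in> events \<Sigma> \<and> B \<in> events \<Sigma> \<and> Pl A \<le> Pl B}"

lemma plaus_le_subset:
  assumes "plausibility \<Sigma> Pl" "A \<subseteq> B" "B \<in> events \<Sigma>"
  shows "(A, B) \<in> plaus_le \<Sigma> Pl"
proof -
  have "A \<in> events \<Sigma>" using assms(2,3) by (rule events_subset)
  then show ?thesis using assms plausibility_mono unfolding plaus_le_def by blast
qed

lemma plaus_le_tests:
  assumes "plausibility \<Sigma> Pl" "T \<in> \<Sigma>" "R \<in> \<Sigma>"
  shows "(T, R) \<in> plaus_le \<Sigma> Pl"
  using assms plausibility_tests_eq[OF assms] test_in_events unfolding plaus_le_def by auto

lemma card_filter_one_based:
  "card {i\<in>{1..length ws}. P (ws ! (i - 1))} = length (filter P ws)"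
proof -
  have "{i\<in>{1..length ws}. P (ws ! (i - 1))} = Suc ` {i. i < length ws \<and> P (ws ! i)}"
  proof (rule set_eqI, rule iffI)
    fix i assume "i \<in> {i\<in>{1..length ws}. P (ws ! (i - 1))}"
    then have "i - 1 \<in> {i. i < length ws \<and> P (ws ! i)}" "i = Suc (i - 1)" by auto
    then show "i \<in> Suc ` {i. i < length ws \<and> P (ws ! i)}" by blast
  qed auto
  then show ?thesis by (simp add: card_image length_filter_conv_card)
qed

lemma archimedean_list:
  assumes arch: "archimedean X \<Sigma> Pl" and "ws \<noteq> []"
    and in_events: "\<forall>(A, B)\<in>set ws. A \<in> events \<Sigma> \<and> B \<in> events \<Sigma>"
    and balanced: "\<forall>x\<in>X. length (filter (\<lambda>(A, B). x \<in> A) ws) = length (filter (\<lambda>(A, B). x \<in> B) ws)"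
    and le: "\<forall>(A, B)\<in>set (butlast ws). Pl A \<le> Pl B"
  shows "Pl (snd (last ws)) \<le> Pl (fst (last ws))"
proof -
  define n where "n = length ws"
  define A where "A i = fst (ws ! (i - 1))" for i
  define B where "B i = snd (ws ! (i - 1))" for i
  have mem: "ws ! (i - 1) \<in> set ws" if "i \<in> {1..n}" for i
    using that unfolding n_def by auto
  have "n \<ge> 1" using \<open>ws \<noteq> []\<close> unfolding n_def by (simp add: Suc_leI)
  moreover have "\<forall>i\<in>{1..n}. A i \<in> events \<Sigma> \<and> B i \<in> events \<Sigma>"
    using in_events mem unfolding A_def B_def by fastforce
  moreover have "card {i\<in>{1..n}. x \<in> A i} = length (filter (\<lambda>(A, B). x \<in> A) ws)"
    and "card {i\<in>{1..n}. x \<in> B i} = length (filter (\<lambda>(A, B). x \<in> B) ws)" for x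
    unfolding n_def A_def B_def case_prod_beta by (rule card_filter_one_based)+
  then have "\<forall>x\<in>X. card {i\<in>{1..n}. x \<in> A i} = card {i\<in>{1..n}. x \<in> B i}"
    using balanced by simp
  moreover have "\<forall>i\<in>{1..n-1}. Pl (A i) \<le> Pl (B i)"
  proof
    fix i assume "i \<in> {1..n-1}"
    then have "i - 1 < length (butlast ws)" unfolding n_def by auto
    then have "ws ! (i - 1) \<in> set (butlast ws)" by (metis nth_butlast nth_mem)
    then show "Pl (A i) \<le> Pl (B i)" using le unfolding A_def B_def by fastforce
  qed
  ultimately have "Pl (B n) \<le> Pl (A n)" using arch unfolding archimedean_def by blast
  moreover have "ws ! (n - 1) = last ws" using \<open>ws \<noteq> []\<close> unfolding n_def by (simp add: last_conv_nth)
  ultimately show ?thesis unfolding A_def B_def by simp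
qed

lemma sum_list_indicator_diff:
  "(\<Sum>(A, B)\<leftarrow>ws. of_bool (x \<in> B) - of_bool (x \<in> A) :: int) =
     int (length (filter (\<lambda>(A, B). x \<in> B) ws)) - int (length (filter (\<lambda>(A, B). x \<in> A) ws))"
  by (induction ws) auto

lemma archimedean_balanced_excludes_empty_test:
  assumes pl: "plausibility \<Sigma> Pl" and arch: "archimedean X \<Sigma> Pl"
    and ws: "set ws \<subseteq> plaus_le \<Sigma> Pl" and "({}, T) \<in> set ws" "T \<in> \<Sigma>"
    and balanced: "\<forall>x. (\<Sum>(A, B)\<leftarrow>ws. of_bool (x \<in> B) - of_bool (x \<in> A) :: int) = 0"
  shows False
proof -
  obtain ys zs where ws_split: "ws = ys @ ({}, T) # zs" using split_list[OF \<open>({}, T) \<in> set ws\<close>] by blast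
  define ws' where "ws' = ys @ zs @ [({}, T)]"
  have "Pl (snd (last ws')) \<le> Pl (fst (last ws'))"
  proof (rule archimedean_list[OF arch])
    show "\<forall>(A, B)\<in>set ws'. A \<in> events \<Sigma> \<and> B \<in> events \<Sigma>"
      using ws unfolding ws_split ws'_def plaus_le_def by auto
    show "\<forall>x\<in>X. length (filter (\<lambda>(A, B). x \<in> A) ws') = length (filter (\<lambda>(A, B). x \<in> B) ws')"
    proof
      fix x
      have "(\<Sum>(A, B)\<leftarrow>ws'. of_bool (x \<in> B) - of_bool (x \<in> A) :: int) =
            (\<Sum>(A, B)\<leftarrow>ws. of_bool (x \<in> B) - of_bool (x \<in> A))"
        unfolding ws_split ws'_def by simp
      then show "length (filter (\<lambda>(A, B). x \<in> A) ws') = length (filter (\<lambda>(A, B). x \<in> B) ws')"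
        using balanced sum_list_indicator_diff[where x = x and ws = ws'] by simp
    qed
    show "\<forall>(A, B)\<in>set (butlast ws'). Pl A \<le> Pl B"
      using ws unfolding ws_split ws'_def plaus_le_def by (auto simp: butlast_append)
  qed (simp add: ws'_def)
  then have "Pl T \<le> Pl {}" unfolding ws'_def by simp
  moreover have "Pl {} < Pl T" using pl \<open>T \<in> \<Sigma>\<close> by (rule plausibility_empty_less_test)
  ultimately show False by simp
qed

definition cmp_ineq :: "'a set \<times> 'a set \<times> bool \<Rightarrow> 'a ineq" where
  "cmp_ineq = (\<lambda>(A, B, s). Ineq (\<lambda>v. of_bool (v \<in> B) - of_bool (v \<in> A)) s)"

lemma lin_cmp_ineq:
  assumes "finite V" "A \<subseteq> V" "B \<subseteq> V"
  shows "lin V (coeff (cmp_ineq (A, B, s))) \<nu> = sum \<nu> B - sum \<nu> A"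
proof -
  have "lin V (coeff (cmp_ineq (A, B, s))) \<nu> =
        (\<Sum>v\<in>V. of_bool (v \<in> B) * \<nu> v) - (\<Sum>v\<in>V. of_bool (v \<in> A) * \<nu> v)"
    unfolding lin_def cmp_ineq_def by (simp add: left_diff_distrib sum_subtractf)
  also have "\<dots> = sum \<nu> B - sum \<nu> A"
    using assms by (simp add: Int_absorb1 Int_absorb2 Int_def[symmetric])
  finally show ?thesis .
qed

lemma archimedean_comparisons_solvable:
  assumes pl: "plausibility \<Sigma> Pl" and arch: "archimedean X \<Sigma> Pl"
    and "finite V" "finite Q"
    and Q: "\<And>A B s. (A, B, s) \<in> Q \<Longrightarrow> (A, B) \<in> plaus_le \<Sigma> Pl \<and> A \<subseteq> V \<and> B \<subseteq> V \<and> (s \<longrightarrow> A = {} \<and> B \<in> \<Sigma>)"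
  shows "\<exists>\<nu> :: 'a \<Rightarrow> real. \<forall>(A, B, s)\<in>Q. sum \<nu> A \<le> sum \<nu> B \<and> (s \<longrightarrow> sum \<nu> A < sum \<nu> B)"
proof -
  from fourier_motzkin[of V "cmp_ineq ` Q"] \<open>finite V\<close> \<open>finite Q\<close>
  consider \<nu> where "\<forall>c\<in>cmp_ineq ` Q. holds V \<nu> c"
    | c where "c \<in> pos_comb (cmp_ineq ` Q)" "strict c" "\<forall>v\<in>V. coeff c v = 0"
    by blast
  then show ?thesis
  proof cases
    case (1 \<nu>)
    have "sum \<nu> A \<le> sum \<nu> B \<and> (s \<longrightarrow> sum \<nu> A < sum \<nu> B)" if "(A, B, s) \<in> Q" for A B s
    proof -
      have "holds V \<nu> (cmp_ineq (A, B, s))" using 1 that by blast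
      moreover have "lin V (coeff (cmp_ineq (A, B, s))) \<nu> = sum \<nu> B - sum \<nu> A"
        using Q[OF that] \<open>finite V\<close> by (intro lin_cmp_ineq) auto
      ultimately show ?thesis unfolding holds_def by (simp add: cmp_ineq_def)
    qed
    then show ?thesis by (intro exI[of _ \<nu>]) auto
  next
    case 2
    obtain cs where cs: "set cs \<subseteq> cmp_ineq ` Q" "\<forall>v. coeff c v = (\<Sum>d\<leftarrow>cs. coeff d v)"
      "strict c \<longleftrightarrow> (\<exists>d\<in>set cs. strict d)"
      using pos_comb_sum_list[OF 2(1)] by (elim exE conjE)
    from cs(1) have "cs \<in> map cmp_ineq ` lists Q" unfolding lists_image[symmetric] by blast
    then obtain qs where qs: "set qs \<subseteq> Q" "cs = map cmp_ineq qs" by blast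
    obtain q where "q \<in> set qs" "strict (cmp_ineq q)" using cs(3) 2(2) qs(2) by auto
    moreover obtain A B s where q: "q = (A, B, s)" by (cases q)
    ultimately have "(A, B, True) \<in> set qs" by (simp add: cmp_ineq_def)
    then have "(A, B, True) \<in> Q" "A = {}" using qs(1) Q by auto
    define ws where "ws = map (\<lambda>(A, B, s). (A, B)) qs"
    show ?thesis
    proof (rule FalseE, rule archimedean_balanced_excludes_empty_test[OF pl arch])
      show "set ws \<subseteq> plaus_le \<Sigma> Pl" using qs(1) Q unfolding ws_def by auto
      show "({}, B) \<in> set ws" using \<open>(A, B, True) \<in> set qs\<close> \<open>A = {}\<close>
        unfolding ws_def by force
      show "B \<in> \<Sigma>" using Q[OF \<open>(A, B, True) \<in> Q\<close>] by blast
      show "\<forall>x. (\<Sum>(A, B)\<leftarrow>ws. of_bool (x \<in> B) - of_bool (x \<in> A) :: int) = 0"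
      proof
        fix x
        have "(\<Sum>(A, B)\<leftarrow>ws. of_bool (x \<in> B) - of_bool (x \<in> A) :: int) = (\<Sum>q\<leftarrow>qs. coeff (cmp_ineq q) x)"
          unfolding ws_def cmp_ineq_def by (simp add: case_prod_beta comp_def)
        also have "\<dots> = 0"
        proof (cases "x \<in> V")
          case True
          then show ?thesis using 2(3) cs(2) qs(2) by (simp add: comp_def)
        next
          case False
          have "coeff (cmp_ineq q) x = 0" if "q \<in> set qs" for q
          proof -
            obtain A B s where q: "q = (A, B, s)" by (cases q)
            then have "A \<subseteq> V" "B \<subseteq> V" using Q qs(1) that by blast+
            then show ?thesis using False unfolding q cmp_ineq_def by auto
          qed
          then have "(\<Sum>q\<leftarrow>qs. coeff (cmp_ineq q) x) = (\<Sum>q\<leftarrow>qs. 0)"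
            by (intro arg_cong[where f = sum_list] map_cong) auto
          then show ?thesis by simp
        qed
        finally show "(\<Sum>(A, B)\<leftarrow>ws. of_bool (x \<in> B) - of_bool (x \<in> A) :: int) = 0" .
      qed
    qed
  qed
qed

lemma finite_tests_system_solvable:
  assumes pl: "plausibility \<Sigma> Pl" and arch: "archimedean X \<Sigma> Pl"
    and \<T>: "finite \<T>" "\<T> \<subseteq> \<Sigma>" "T0 \<in> \<T>" "\<forall>T\<in>\<T>. finite T"
    and \<P>: "finite \<P>" "\<P> \<subseteq> plaus_le \<Sigma> Pl" "\<forall>(A, B)\<in>\<P>. A \<union> B \<subseteq> \<Union>\<T>"
  shows "\<exists>\<mu> :: 'a \<Rightarrow> real. (\<forall>x\<in>\<Union>\<T>. 0 \<le> \<mu> x) \<and> (\<forall>T\<in>\<T>. sum \<mu> T = 1) \<and>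
           (\<forall>(A, B)\<in>\<P>. sum \<mu> A \<le> sum \<mu> B)"
proof -
  define V where "V = \<Union>\<T>"
  \<comment> \<open>\<open>\<emptyset> \<preceq> {v}\<close> forces \<open>\<nu> \<ge> 0\<close>, the comparisons both ways between \<open>T\<^sub>0\<close> and \<open>T\<close> force
    \<open>\<nu>(T) = \<nu>(T\<^sub>0)\<close>, and the strict \<open>\<emptyset> \<prec> T\<^sub>0\<close> rules out \<open>\<nu> = 0\<close>, so \<open>\<nu>\<close> can be normalised.\<close>
  define Q where "Q = (\<lambda>v. ({}, {v}, False)) ` V \<union> (\<lambda>T. (T0, T, False)) ` \<T> \<union>
    (\<lambda>T. (T, T0, False)) ` \<T> \<union> (\<lambda>(A, B). (A, B, False)) ` \<P> \<union> {({}, T0, True)}"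
  have "finite V" using \<T>(1,4) unfolding V_def by auto
  moreover have "finite Q" unfolding Q_def using \<open>finite V\<close> \<T>(1) \<P>(1) by auto
  moreover have "(A, B) \<in> plaus_le \<Sigma> Pl \<and> A \<subseteq> V \<and> B \<subseteq> V \<and> (s \<longrightarrow> A = {} \<and> B \<in> \<Sigma>)"
    if "(A, B, s) \<in> Q" for A B s
  proof -
    have T0: "T0 \<in> \<Sigma>" "T0 \<subseteq> V" using \<T>(2,3) unfolding V_def by auto
    have "({}, {v}) \<in> plaus_le \<Sigma> Pl" if "v \<in> V" for v
      using that \<T>(2) unfolding V_def
      by (blast intro: plaus_le_subset[OF pl] events_subset[of "{v}"] test_in_events)
    moreover have "({}, T0) \<in> plaus_le \<Sigma> Pl"
      using T0 by (blast intro: plaus_le_subset[OF pl] test_in_events)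
    ultimately show ?thesis
      using that T0 \<T>(2) \<P>(2,3) unfolding Q_def V_def
      by (auto intro: plaus_le_tests[OF pl])
  qed
  ultimately obtain \<nu> :: "'a \<Rightarrow> real" where
    \<nu>: "\<And>A B s. (A, B, s) \<in> Q \<Longrightarrow> sum \<nu> A \<le> sum \<nu> B \<and> (s \<longrightarrow> sum \<nu> A < sum \<nu> B)"
    using archimedean_comparisons_solvable[OF pl arch, of V Q] by fast
  define s where "s = sum \<nu> T0"
  have "0 < s" using \<nu>[of "{}" T0 True] unfolding Q_def s_def by simp
  have "0 \<le> \<nu> v" if "v \<in> V" for v using \<nu>[of "{}" "{v}" False] that unfolding Q_def by simp
  moreover have "sum \<nu> T = s" if "T \<in> \<T>" for T
    using \<nu>[of T0 T False] \<nu>[of T T0 False] that unfolding Q_def s_def by fastforce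
  moreover have "sum \<nu> A \<le> sum \<nu> B" if "(A, B) \<in> \<P>" for A B
    using \<nu>[of A B False] that unfolding Q_def by fastforce
  ultimately show ?thesis using \<open>0 < s\<close> unfolding V_def
    by (intro exI[of _ "\<lambda>v. \<nu> v / s"]) (auto simp: sum_divide_distrib[symmetric] divide_right_mono)
qed

lemma finite_system_in_unit_cube:
  assumes lf: "locally_finite X \<Sigma>" and pl: "plausibility \<Sigma> Pl" and arch: "archimedean X \<Sigma> Pl"
    and "\<Sigma> \<noteq> {}" and \<T>: "finite \<T>" "\<T> \<subseteq> \<Sigma>" and \<P>: "finite \<P>" "\<P> \<subseteq> plaus_le \<Sigma> Pl"
  shows "\<exists>\<mu>\<in>PiE X (\<lambda>_. {0..1::real}). (\<forall>T\<in>\<T>. sum \<mu> T = 1) \<and> (\<forall>(A, B)\<in>\<P>. sum \<mu> A \<le> sum \<mu> B)"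
proof -
  obtain T0 where "T0 \<in> \<Sigma>" using \<open>\<Sigma> \<noteq> {}\<close> by blast
  have "\<forall>A\<in>events \<Sigma>. \<exists>T. T \<in> \<Sigma> \<and> A \<subseteq> T" unfolding events_def by blast
  from bchoice[OF this] obtain tst where tst: "\<forall>A\<in>events \<Sigma>. tst A \<in> \<Sigma> \<and> A \<subseteq> tst A"
    by (rule exE)
  \<comment> \<open>Tests containing the events of \<open>\<P>\<close> are added so that every outcome involved lies in a
    test of the system, which bounds \<open>\<mu>\<close> by 1 there; outside of them \<open>\<mu>\<close> is set to 0.\<close>
  define \<T>' where "\<T>' = insert T0 (\<T> \<union> tst ` (fst ` \<P> \<union> snd ` \<P>))"
  have fin: "finite \<T>'" using \<T>(1) \<P>(1) unfolding \<T>'_def by simp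
  have sub: "\<T>' \<subseteq> \<Sigma>" using \<T>(2) \<P>(2) tst \<open>T0 \<in> \<Sigma>\<close> unfolding \<T>'_def plaus_le_def by auto
  have tests: "\<forall>T\<in>\<Sigma>. finite T" "\<Union>\<Sigma> \<subseteq> X"
    using lf unfolding locally_finite_def test_space_def by auto
  have "A \<union> B \<subseteq> \<Union>\<T>'" if "(A, B) \<in> \<P>" for A B
  proof -
    have "A \<in> fst ` \<P>" "B \<in> snd ` \<P>" using that by force+
    then have "tst A \<in> \<T>'" "tst B \<in> \<T>'" unfolding \<T>'_def by auto
    moreover have "A \<subseteq> tst A" "B \<subseteq> tst B" using tst that \<P>(2) unfolding plaus_le_def by auto
    ultimately show ?thesis by blast
  qed
  then have covered: "\<forall>(A, B)\<in>\<P>. A \<union> B \<subseteq> \<Union>\<T>'" by blast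
  have "T0 \<in> \<T>'" unfolding \<T>'_def by simp
  moreover have "\<forall>T\<in>\<T>'. finite T" using tests(1) sub by blast
  ultimately
  obtain \<mu> :: "'a \<Rightarrow> real" where \<mu>: "\<forall>x\<in>\<Union>\<T>'. 0 \<le> \<mu> x" "\<forall>T\<in>\<T>'. sum \<mu> T = 1"
    "\<forall>(A, B)\<in>\<P>. sum \<mu> A \<le> sum \<mu> B"
    using finite_tests_system_solvable[OF pl arch fin sub _ _ \<P> covered] by blast
  define \<mu>' where "\<mu>' = restrict (\<lambda>x. if x \<in> \<Union>\<T>' then \<mu> x else 0) X"
  have sum_\<mu>': "sum \<mu>' S = sum \<mu> S" if "S \<subseteq> \<Union>\<T>'" for S
    using that sub tests(2) unfolding \<mu>'_def by (intro sum.cong) auto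
  have "\<mu> x \<le> 1" if "x \<in> T" "T \<in> \<T>'" for x T
    using member_le_sum[of x T \<mu>] \<mu>(1,2) that sub tests(1) by fastforce
  then have "\<mu>' \<in> PiE X (\<lambda>_. {0..1})" using \<mu>(1) unfolding \<mu>'_def by auto
  moreover have "sum \<mu>' T = 1" if "T \<in> \<T>" for T
  proof -
    have "T \<in> \<T>'" using that unfolding \<T>'_def by simp
    then show ?thesis using sum_\<mu>'[of T] \<mu>(2) by auto
  qed
  moreover have "\<forall>(A, B)\<in>\<P>. sum \<mu>' A \<le> sum \<mu>' B"
    using \<mu>(3) sum_\<mu>' covered by fastforce
  ultimately show ?thesis by blast
qed

lemma continuous_map_sum_coordinates:
  "finite S \<Longrightarrow> S \<subseteq> X \<Longrightarrow>
    continuous_map (product_topology (\<lambda>_. euclidean) X) euclidean (\<lambda>\<mu>. sum \<mu> S :: real)"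
  by (intro continuous_map_sum) (auto intro: continuous_map_product_projection)

lemma continuous_map_sum_event:
  assumes "locally_finite X \<Sigma>" "A \<in> events \<Sigma>"
  shows "continuous_map (product_topology (\<lambda>_. euclidean) X) euclidean (\<lambda>\<mu>. sum \<mu> A :: real)"
  using event_finite_subset[OF assms] by (rule continuous_map_sum_coordinates)

lemma unit_cube_compactness:
  fixes \<Phi> :: "'i \<Rightarrow> ('a \<Rightarrow> real) \<Rightarrow> real"
  assumes cont: "\<And>i. i \<in> I \<Longrightarrow> continuous_map (product_topology (\<lambda>_. euclidean) X) euclidean (\<Phi> i)"
    and closed: "\<And>i. i \<in> I \<Longrightarrow> closed (K i)"
    and finite_sub: "\<And>J. finite J \<Longrightarrow> J \<subseteq> I \<Longrightarrow> \<exists>\<mu>\<in>PiE X (\<lambda>_. {0..1}). \<forall>i\<in>J. \<Phi> i \<mu> \<in> K i"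
  shows "\<exists>\<mu>\<in>PiE X (\<lambda>_. {0..1}). \<forall>i\<in>I. \<Phi> i \<mu> \<in> K i"
proof -
  define TOP where "TOP = product_topology (\<lambda>_. (euclidean :: real topology)) X"
  define F where "F i = {\<mu> \<in> topspace TOP. \<Phi> i \<mu> \<in> K i}" for i
  have cube: "compactin TOP (PiE X (\<lambda>_. {0..1}))" unfolding TOP_def by (simp add: compactin_PiE)
  have "closedin TOP (F i)" if "i \<in> I" for i
    using closedin_continuous_map_preimage[OF cont[OF that], of "K i"] closed[OF that]
    unfolding F_def TOP_def closed_closedin by blast
  then have "\<forall>C\<in>F ` I. closedin TOP C" by blast
  moreover have "PiE X (\<lambda>_. {0..1}) \<inter> \<Inter>\<F> \<noteq> {}" if "finite \<F>" "\<F> \<subseteq> F ` I" for \<F>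
  proof -
    from finite_subset_image[OF that] obtain J where "J \<subseteq> I" "finite J" "\<F> = F ` J" by blast
    then obtain \<mu> where "\<mu> \<in> PiE X (\<lambda>_. {0..1})" "\<forall>i\<in>J. \<Phi> i \<mu> \<in> K i" using finite_sub by blast
    then show ?thesis unfolding \<open>\<F> = F ` J\<close> F_def TOP_def by auto
  qed
  ultimately have "PiE X (\<lambda>_. {0..1}) \<inter> \<Inter>(F ` I) \<noteq> {}" using cube unfolding compactin_fip by blast
  then show ?thesis unfolding F_def by blast
qed

lemma plaus_le_solution_in_unit_cube:
  assumes "locally_finite X \<Sigma>" "plausibility \<Sigma> Pl" "archimedean X \<Sigma> Pl" "\<Sigma> \<noteq> {}"
  shows "\<exists>\<mu>\<in>PiE X (\<lambda>_. {0..1::real}). (\<forall>T\<in>\<Sigma>. sum \<mu> T = 1) \<and>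
           (\<forall>(A, B)\<in>plaus_le \<Sigma> Pl. sum \<mu> A \<le> sum \<mu> B)"
proof -
  define I where "I = Inl ` \<Sigma> \<union> Inr ` plaus_le \<Sigma> Pl"
  define \<Phi> :: "'a set + 'a set \<times> 'a set \<Rightarrow> ('a \<Rightarrow> real) \<Rightarrow> real"
    where "\<Phi> = case_sum (\<lambda>T \<mu>. sum \<mu> T) (\<lambda>(A, B) \<mu>. sum \<mu> B - sum \<mu> A)"
  define K :: "'a set + 'a set \<times> 'a set \<Rightarrow> real set" where "K = case_sum (\<lambda>_. {1::real}) (\<lambda>_. {0..})"
  have "\<exists>\<mu>\<in>PiE X (\<lambda>_. {0..1}). \<forall>i\<in>I. \<Phi> i \<mu> \<in> K i"
  proof (rule unit_cube_compactness)
    fix i assume "i \<in> I"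
    note sum_cont = continuous_map_sum_event[OF assms(1)]
    from \<open>i \<in> I\<close> consider T where "T \<in> \<Sigma>" "i = Inl T"
      | A B where "A \<in> events \<Sigma>" "B \<in> events \<Sigma>" "i = Inr (A, B)"
      unfolding I_def plaus_le_def by blast
    then show "continuous_map (product_topology (\<lambda>_. euclidean) X) euclidean (\<Phi> i)"
    proof cases
      case 1
      then show ?thesis unfolding \<Phi>_def using sum_cont[OF test_in_events] by simp
    next
      case 2
      then show ?thesis unfolding \<Phi>_def using continuous_map_diff[OF sum_cont sum_cont] by simp
    qed
    show "closed (K i)" unfolding K_def by (cases i) auto
  next
    fix J assume "finite J" "J \<subseteq> I"
    have "Inl -` J \<subseteq> \<Sigma>" "Inr -` J \<subseteq> plaus_le \<Sigma> Pl"
      using \<open>J \<subseteq> I\<close> unfolding I_def by blast+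
    from finite_system_in_unit_cube[OF assms finite_vimageI[OF \<open>finite J\<close> inj_Inl] this(1)
        finite_vimageI[OF \<open>finite J\<close> inj_Inr] this(2)]
    obtain \<mu> :: "'a \<Rightarrow> real" where \<mu>: "\<mu> \<in> PiE X (\<lambda>_. {0..1})" "\<forall>T\<in>Inl -` J. sum \<mu> T = 1"
      "\<forall>(A, B)\<in>Inr -` J. sum \<mu> A \<le> sum \<mu> B"
      by blast
    have "\<Phi> i \<mu> \<in> K i" if "i \<in> J" for i
      using that \<mu>(2,3) by (cases i) (fastforce simp: \<Phi>_def K_def)+
    then show "\<exists>\<mu>\<in>PiE X (\<lambda>_. {0..1}). \<forall>i\<in>J. \<Phi> i \<mu> \<in> K i" using \<mu>(1) by blast
  qed
  then obtain \<mu> where \<mu>: "\<mu> \<in> PiE X (\<lambda>_. {0..1})" "\<forall>i\<in>I. \<Phi> i \<mu> \<in> K i" by blast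
  have "sum \<mu> T = 1" if "T \<in> \<Sigma>" for T
    using \<mu>(2)[rule_format, of "Inl T"] that unfolding I_def \<Phi>_def K_def by simp
  moreover have "sum \<mu> A \<le> sum \<mu> B" if "(A, B) \<in> plaus_le \<Sigma> Pl" for A B
    using \<mu>(2)[rule_format, of "Inr (A, B)"] that unfolding I_def \<Phi>_def K_def by simp
  ultimately show ?thesis using \<mu>(1) by blast
qed

theorem theorem2:
  fixes X :: "'a set" and \<Sigma> :: "'a set set" and Pl :: "'a set \<Rightarrow> 'd::order"
  assumes "locally_finite X \<Sigma>"
    and "plausibility \<Sigma> Pl"
    and "archimedean X \<Sigma> Pl"
  shows "\<exists>\<mu>. prob_measure X \<Sigma> \<mu> \<and>
           (\<forall>A\<in>events \<Sigma>. \<forall>B\<in>events \<Sigma>. Pl A \<le> Pl B \<longrightarrow> (\<Sum>x\<in>A. \<mu> x) \<le> (\<Sum>x\<in>B. \<mu> x))"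
proof (cases "\<Sigma> = {}")
  case True
  then show ?thesis by (intro exI[of _ "\<lambda>_. 0"]) (auto simp: prob_measure_def events_def)
next
  case False
  from plaus_le_solution_in_unit_cube[OF assms False] obtain \<mu> :: "'a \<Rightarrow> real" where
    "\<mu> \<in> PiE X (\<lambda>_. {0..1})" "\<forall>T\<in>\<Sigma>. sum \<mu> T = 1"
    "\<forall>(A, B)\<in>plaus_le \<Sigma> Pl. sum \<mu> A \<le> sum \<mu> B"
    by blast
  then show ?thesis unfolding prob_measure_def plaus_le_def by (intro exI[of _ \<mu>]) auto
qed

end
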